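(* Let $G$ and $H$ be groups and $f:G\to H$ a function such that for all $x,x'\in G$ there is $h\in H$ (depending on $x,x'$) with $f(xx')=f(x)^h\,f(x')$. Let $G_0$, $G_1$ be groups, $f_0:G_0\to H$ and $f_1:G_1\to H$ functions, $c\in H$, and $k\ge2$ an integer. If the set $\{(x_0,x,x_1)\in G_0\times G\times G_1: f_0(x_0)\,f(x)\,f_1(x_1)=c\}$ is $k$-large in $G_0\times G\times G_1$, then $f(g)=1$ for all $g\in G$, and the set $\{(x_0,x_1)\in G_0\times G_1:f_0(x_0)\,f_1(x_1)=c\}$ is $k$-large in $G_0\times G_1$.
   Context: $a^h=h^{-1}ah$. A subset $X$ of a group $K$ is $k$-large in $K$ if the intersection of any $k$ left translates $a_1X\cap\dots\cap a_kX$ ($a_i\in K$) is non-empty. *)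

theory Defs
  imports "HOL-Algebra.Algebra"
begin

definition conj_by :: "('a, 'm) monoid_scheme \<Rightarrow> 'a \<Rightarrow> 'a \<Rightarrow> 'a" where
  "conj_by H a h = inv\<^bsub>H\<^esub> h \<otimes>\<^bsub>H\<^esub> a \<otimes>\<^bsub>H\<^esub> h"

definition k_large :: "nat \<Rightarrow> ('a, 'm) monoid_scheme \<Rightarrow> 'a set \<Rightarrow> bool" where
  "k_large k Grp S \<longleftrightarrow>
     (\<forall>a. (\<forall>i<k. a i \<in> carrier Grp) \<longrightarrow> (\<exists>y. \<forall>i<k. y \<in> l_coset Grp (a i) S))"

end

theory Submission
  imports Defs
begin

text \<open>A \<open>k\<close>-large set \<open>S\<close> with \<open>k \<ge> 2\<close> meets each of its translates, in particular its
  translate by \<open>(1, g, 1)\<close>: some \<open>(x\<^sub>0, x, x\<^sub>1)\<close> and \<open>(x\<^sub>0, g x, x\<^sub>1)\<close> both solve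
  \<open>f\<^sub>0 x\<^sub>0 f x f\<^sub>1 x\<^sub>1 = c\<close>. Cancelling gives \<open>f (g x) = f x\<close>, while the hypothesis on \<open>f\<close>
  gives \<open>f (g x) = f(g)\<^sup>h f x\<close>; so \<open>f(g)\<^sup>h\<close>, and with it \<open>f g\<close>, is trivial. Once \<open>f = 1\<close>,
  the projection forgetting the middle coordinate is a surjective homomorphism mapping
  \<open>S\<close> into the solution set in \<open>G\<^sub>0 \<times> G\<^sub>1\<close>, and such images of large sets are large.\<close>

lemma conj_by_eq_one_iff:
  fixes H (structure)
  assumes "group H" "a \<in> carrier H" "h \<in> carrier H"
  shows "conj_by H a h = \<one> \<longleftrightarrow> a = \<one>"
proof
  interpret group H by fact
  assume "conj_by H a h = \<one>"
  then have "h \<otimes> conj_by H a h \<otimes> inv h = \<one>"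
    using assms by simp
  moreover have "h \<otimes> conj_by H a h \<otimes> inv h = a"
    using assms by (simp add: conj_by_def m_assoc flip: m_assoc[of h "inv h"])
  ultimately show "a = \<one>" by simp
next
  interpret group H by fact
  show "a = \<one> \<Longrightarrow> conj_by H a h = \<one>"
    using assms by (simp add: conj_by_def)
qed

lemma conj_twisted_eq_one_if_translate_fixed:
  fixes H (structure)
  assumes "group H" "f \<in> carrier G \<rightarrow> carrier H"
    and "\<forall>x\<in>carrier G. \<forall>x'\<in>carrier G. \<exists>h\<in>carrier H.
           f (x \<otimes>\<^bsub>G\<^esub> x') = conj_by H (f x) h \<otimes> f x'"
    and "g \<in> carrier G" "x \<in> carrier G" "f (g \<otimes>\<^bsub>G\<^esub> x) = f x"
  shows "f g = \<one>"
proof -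
  interpret group H by fact
  have fg: "f g \<in> carrier H" and fx: "f x \<in> carrier H"
    using assms(2,4,5) by auto
  obtain h where h: "h \<in> carrier H" and "f (g \<otimes>\<^bsub>G\<^esub> x) = conj_by H (f g) h \<otimes> f x"
    using assms(3-5) by blast
  with assms(6) have "conj_by H (f g) h \<otimes> f x = \<one> \<otimes> f x"
    using fx by simp
  then have "conj_by H (f g) h = \<one>"
    using fg fx h by (simp add: conj_by_def)
  then show ?thesis
    using conj_by_eq_one_iff[OF assms(1) fg h] by blast
qed

lemma k_large_translate_meets:
  fixes K (structure)
  assumes "monoid K" "S \<subseteq> carrier K" "k_large k K S" "2 \<le> k" "g \<in> carrier K"
  shows "\<exists>t\<in>S. g \<otimes> t \<in> S"
proof -
  interpret monoid K by fact
  define a where "a = (\<lambda>i::nat. if i = 0 then \<one> else g)"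
  have "\<forall>i<k. a i \<in> carrier K"
    using assms(5) by (simp add: a_def)
  then obtain y where "\<forall>i<k. y \<in> a i <# S"
    using assms(3) unfolding k_large_def by blast
  then have "y \<in> \<one> <# S" "y \<in> g <# S"
    using assms(4) by (auto simp: a_def dest: spec[of _ 0] spec[of _ 1])
  then obtain s t where "s \<in> S" "t \<in> S" "\<one> \<otimes> s = g \<otimes> t"
    by (auto simp: l_coset_def)
  moreover from this have "\<one> \<otimes> s = s"
    using assms(2) by auto
  ultimately show ?thesis
    by metis
qed

lemma k_large_mono:
  assumes "k_large k K S" "S \<subseteq> T"
  shows "k_large k K T"
proof -
  have "a <#\<^bsub>K\<^esub> S \<subseteq> a <#\<^bsub>K\<^esub> T" for a
    using assms(2) by (simp add: l_coset_eq_set_mult mono_set_mult)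
  then show ?thesis
    using assms(1) unfolding k_large_def by blast
qed

lemma k_large_hom_image:
  assumes "\<phi> \<in> hom K L" "\<phi> ` carrier K = carrier L" "S \<subseteq> carrier K" "k_large k K S"
  shows "k_large k L (\<phi> ` S)"
  unfolding k_large_def
proof (intro allI impI)
  fix a assume a: "\<forall>i<k. a i \<in> carrier L"
  define b where "b i = inv_into (carrier K) \<phi> (a i)" for i
  have b: "\<forall>i<k. b i \<in> carrier K \<and> \<phi> (b i) = a i"
    using assms(2) a by (simp add: b_def inv_into_into f_inv_into_f)
  then obtain y where y: "\<forall>i<k. y \<in> b i <#\<^bsub>K\<^esub> S"
    using assms(4) unfolding k_large_def by blast
  have "\<phi> y \<in> a i <#\<^bsub>L\<^esub> \<phi> ` S" if "i < k" for i
  proof -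
    have "\<phi> y \<in> \<phi> ` (b i <#\<^bsub>K\<^esub> S)"
      using y that by blast
    also have "\<dots> = a i <#\<^bsub>L\<^esub> \<phi> ` S"
      using coset_hom(1)[OF assms(1,3)] b that by simp
    finally show ?thesis .
  qed
  then show "\<exists>z. \<forall>i<k. z \<in> a i <#\<^bsub>L\<^esub> \<phi> ` S"
    by blast
qed

lemma k_large_DirProd_drop_middle:
  assumes "monoid B" "S \<subseteq> carrier (A \<times>\<times> B \<times>\<times> C)" "k_large k (A \<times>\<times> B \<times>\<times> C) S"
  shows "k_large k (A \<times>\<times> C) ((\<lambda>(x, y, z). (x, z)) ` S)"
proof (rule k_large_hom_image[OF _ _ assms(2,3)])
  show "(\<lambda>(x, y, z). (x, z)) \<in> hom (A \<times>\<times> B \<times>\<times> C) (A \<times>\<times> C)"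
    by (auto simp: hom_def)
  show "(\<lambda>(x, y, z). (x, z)) ` carrier (A \<times>\<times> B \<times>\<times> C) = carrier (A \<times>\<times> C)"
    using monoid.one_closed[OF assms(1)] by (force simp: image_iff)
qed

lemma conj_twisted_map_trivial_if_large:
  fixes H (structure)
  assumes "monoid G" "group H" "monoid G0" "monoid G1"
    and "f \<in> carrier G \<rightarrow> carrier H"
    and "\<forall>x\<in>carrier G. \<forall>x'\<in>carrier G. \<exists>h\<in>carrier H.
           f (x \<otimes>\<^bsub>G\<^esub> x') = conj_by H (f x) h \<otimes> f x'"
    and "f0 \<in> carrier G0 \<rightarrow> carrier H" "f1 \<in> carrier G1 \<rightarrow> carrier H"
    and "2 \<le> k"
    and "k_large k (G0 \<times>\<times> G \<times>\<times> G1)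
           {(x0, x, x1). x0 \<in> carrier G0 \<and> x \<in> carrier G \<and> x1 \<in> carrier G1 \<and>
              f0 x0 \<otimes> f x \<otimes> f1 x1 = c}" (is "k_large k ?K ?S")
    and "g \<in> carrier G"
  shows "f g = \<one>"
proof -
  interpret H: group H by fact
  have "?S \<subseteq> carrier ?K"
    by auto
  moreover have "(\<one>\<^bsub>G0\<^esub>, g, \<one>\<^bsub>G1\<^esub>) \<in> carrier ?K"
    using assms(1,3,4,11) by simp
  ultimately have "\<exists>t\<in>?S. (\<one>\<^bsub>G0\<^esub>, g, \<one>\<^bsub>G1\<^esub>) \<otimes>\<^bsub>?K\<^esub> t \<in> ?S"
    by (rule k_large_translate_meets[OF DirProd_monoid[OF assms(3) DirProd_monoid[OF assms(1,4)]]
        _ assms(10,9)])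
  then obtain t where "t \<in> ?S" "(\<one>\<^bsub>G0\<^esub>, g, \<one>\<^bsub>G1\<^esub>) \<otimes>\<^bsub>?K\<^esub> t \<in> ?S" ..
  then obtain x0 x x1 where "(x0, x, x1) \<in> ?S" "(x0, g \<otimes>\<^bsub>G\<^esub> x, x1) \<in> ?S"
    using assms(3,4) by (cases t) auto
  then have "f0 x0 \<otimes> f (g \<otimes>\<^bsub>G\<^esub> x) \<otimes> f1 x1 = f0 x0 \<otimes> f x \<otimes> f1 x1"
    and x: "x0 \<in> carrier G0" "x \<in> carrier G" "x1 \<in> carrier G1"
    by auto
  then have "f (g \<otimes>\<^bsub>G\<^esub> x) = f x"
    using assms(1,5,7,8,11) by (simp add: Pi_iff monoid.m_closed)
  then show ?thesis
    using conj_twisted_eq_one_if_translate_fixed[OF assms(2,5,6,11) x(2)] by blast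
qed

theorem theorem5p1:
  fixes G :: "('g, 'mg) monoid_scheme" and H :: "('h, 'mh) monoid_scheme"
    and G0 :: "('a, 'ma) monoid_scheme" and G1 :: "('b, 'mb) monoid_scheme"
    and f :: "'g \<Rightarrow> 'h" and f0 :: "'a \<Rightarrow> 'h" and f1 :: "'b \<Rightarrow> 'h"
    and c :: 'h and k :: nat
  assumes "group G" and "group H" and "group G0" and "group G1"
    and "f \<in> carrier G \<rightarrow> carrier H"
    and "\<forall>x\<in>carrier G. \<forall>x'\<in>carrier G. \<exists>h\<in>carrier H.
           f (x \<otimes>\<^bsub>G\<^esub> x') = conj_by H (f x) h \<otimes>\<^bsub>H\<^esub> f x'"
    and "f0 \<in> carrier G0 \<rightarrow> carrier H"
    and "f1 \<in> carrier G1 \<rightarrow> carrier H"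
    and "c \<in> carrier H"
    and "k \<ge> 2"
    and "k_large k (G0 \<times>\<times> G \<times>\<times> G1)
           {(x0, x, x1). x0 \<in> carrier G0 \<and> x \<in> carrier G \<and> x1 \<in> carrier G1 \<and>
              f0 x0 \<otimes>\<^bsub>H\<^esub> f x \<otimes>\<^bsub>H\<^esub> f1 x1 = c}"
  shows "(\<forall>g\<in>carrier G. f g = \<one>\<^bsub>H\<^esub>) \<and>
         k_large k (G0 \<times>\<times> G1)
           {(x0, x1). x0 \<in> carrier G0 \<and> x1 \<in> carrier G1 \<and>
              f0 x0 \<otimes>\<^bsub>H\<^esub> f1 x1 = c}"
proof -
  interpret G: group G by fact
  interpret G0: group G0 by fact
  interpret G1: group G1 by fact
  interpret H: group H by fact
  let ?S = "{(x0, x, x1). x0 \<in> carrier G0 \<and> x \<in> carrier G \<and> x1 \<in> carrier G1 \<and>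
    f0 x0 \<otimes>\<^bsub>H\<^esub> f x \<otimes>\<^bsub>H\<^esub> f1 x1 = c}"
  have f_trivial: "\<forall>g\<in>carrier G. f g = \<one>\<^bsub>H\<^esub>"
    using conj_twisted_map_trivial_if_large[OF G.monoid_axioms assms(2) G0.monoid_axioms
        G1.monoid_axioms assms(5-8,10,11)] by blast
  have "?S \<subseteq> carrier (G0 \<times>\<times> G \<times>\<times> G1)"
    by auto
  then have "k_large k (G0 \<times>\<times> G1) ((\<lambda>(x, y, z). (x, z)) ` ?S)"
    by (rule k_large_DirProd_drop_middle[OF G.monoid_axioms _ assms(11)])
  moreover have "(\<lambda>(x, y, z). (x, z)) ` ?S \<subseteq>
      {(x0, x1). x0 \<in> carrier G0 \<and> x1 \<in> carrier G1 \<and> f0 x0 \<otimes>\<^bsub>H\<^esub> f1 x1 = c}"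
    using f_trivial funcset_mem[OF assms(7)] by auto
  ultimately have "k_large k (G0 \<times>\<times> G1)
      {(x0, x1). x0 \<in> carrier G0 \<and> x1 \<in> carrier G1 \<and> f0 x0 \<otimes>\<^bsub>H\<^esub> f1 x1 = c}"
    by (rule k_large_mono)
  with f_trivial show ?thesis ..
qed

end
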